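(* Let $(X^t)_{t\ge 0}$ be the random walk on $G_{m,n}$ started at the identity and driven by the OST shuffle $OST_{m,n}$, and let $Y^t=(X^t)^{-1}$. For $j\in[n]$, let $T_j$ be the first time at which position $j$ is selected on the first draw of the shuffle (i.e. the first step in which the chosen index $j$ equals the given $j$). If $T_j\le t$, then $(Y^t)$ satisfies property $\mathcal{P}_j$ at time $t$, namely \[\mathbb{P}\bigl(Y^t(j)=x \mid Y^t(i)\text{ for all } j<i\le n\bigr)=\begin{cases}\frac{1}{mj}, & x\in\mathcal{G}^t_j,\\ 0,&\text{otherwise,}\end{cases}\] where $\mathcal{G}^t_j=\{\xi^k i: i\in[n],k\in\mathbb{Z}_m\}\setminus\{Y^t(\xi^k i): j<i\le n,\ k\in\mathbb{Z}_m\}$.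
   Context: Let $\xi$ be a primitive $m$-th root of unity and $[n]=\{1,\dots,n\}$. The generalized symmetric group $G_{m,n}$ is the group of bijections $\varphi$ of $\{\xi^k i: i\in[n],k\in\mathbb{Z}_m\}$ with $\varphi(\xi^k i)=\xi^k\varphi(i)$; equivalently tuples $(\xi^{k_1},\dots,\xi^{k_n},\sigma)$, $\sigma\in S_n$, acting by $i\mapsto \xi^{k_i}\sigma(i)$, with multiplication $(\xi^{k_1},\dots,\xi^{k_n},\sigma)(\xi^{k_1'},\dots,\xi^{k_n'},\sigma')=(\xi^{k_1}\xi^{k'_{\sigma(1)}},\dots,\xi^{k_n}\xi^{k'_{\sigma(n)}},\sigma\sigma')$. Elements are interpreted as arrangements of a deck of $n$ cards, each in one of $m$ orientations. For $1\le i\le j\le n$, $k\in\mathbb{Z}_m$, let $g_{i,j,k}$ have permutation part the transposition $(ij)$ (identity if $i=j$) and tuple with $\xi^k$ in positions $i$ and $j$ and $1$ elsewhere. One step of the OST shuffle: choose $j$ uniformly in $[n]$ (the "first draw"), then $i$ uniformly in $[j]$, and $k$ uniformly in $\mathbb{Z}_m$, independently, and multiply by $g_{i,j,k}$; so each triple has probability $\frac{1}{njm}$. For $\varphi\in G_{m,n}$ one writes $\varphi(\xi^k i)=\xi^k\varphi(i)$. *)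

theory Defs
  imports "HOL-Probability.Probability"
begin

text \<open>Elements of the generalized symmetric group G_{m,n} as pairs (k, sigma):
  k i is the exponent of xi in position i (an element of Z_m, stored as a nat below m),
  sigma is the permutation part (a permutation of {1..n}, identity elsewhere).
  The element xi^c i of the signed card set is represented by the pair (i, c).\<close>

type_synonym gsym = "(nat \<Rightarrow> nat) \<times> (nat \<Rightarrow> nat)"

text \<open>Multiplication exactly as in the paper:
  (k, sigma)(k', sigma') = (i |-> k_i + k'_{sigma(i)}, sigma sigma'),
  where the permutation product sigma sigma' means "first sigma, then sigma'"
  (the only reading for which the formula is associative).\<close>
definition gmult :: "nat \<Rightarrow> gsym \<Rightarrow> gsym \<Rightarrow> gsym" where
  "gmult m a b = ((\<lambda>i. (fst a i + fst b (snd a i)) mod m), snd b \<circ> snd a)"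

definition gid :: gsym where
  "gid = ((\<lambda>i. 0), id)"

definition ginv :: "nat \<Rightarrow> gsym \<Rightarrow> gsym" where
  "ginv m a = ((\<lambda>l. (m - fst a (inv (snd a) l) mod m) mod m), inv (snd a))"

definition gact :: "nat \<Rightarrow> gsym \<Rightarrow> nat \<times> nat \<Rightarrow> nat \<times> nat" where
  "gact m a x = (snd a (fst x), (snd x + fst a (fst x)) mod m)"

definition ggen :: "nat \<Rightarrow> nat \<Rightarrow> nat \<Rightarrow> nat \<Rightarrow> gsym" where
  "ggen m i j k = ((\<lambda>l. if l = i \<or> l = j then k mod m else 0),
                   (\<lambda>l. if l = i then j else if l = j then i else l))"

definition ost_step :: "nat \<Rightarrow> nat \<Rightarrow> (nat \<times> nat \<times> nat) pmf" where
  "ost_step m n =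
     pmf_of_set {1..n} \<bind> (\<lambda>j. pmf_of_set {1..j} \<bind> (\<lambda>i.
       pmf_of_set {..<m} \<bind> (\<lambda>k. return_pmf (j, i, k))))"

primrec ost_steps :: "nat \<Rightarrow> nat \<Rightarrow> nat \<Rightarrow> (nat \<times> nat \<times> nat) list pmf" where
  "ost_steps m n 0 = return_pmf []"
| "ost_steps m n (Suc t) = ost_steps m n t \<bind> (\<lambda>\<omega>. map_pmf (\<lambda>s. \<omega> @ [s]) (ost_step m n))"

definition Xwalk :: "nat \<Rightarrow> (nat \<times> nat \<times> nat) list \<Rightarrow> gsym" where
  "Xwalk m \<omega> = foldl (\<lambda>x (j, i, k). gmult m x (ggen m i j k)) gid \<omega>"

definition Ywalk :: "nat \<Rightarrow> (nat \<times> nat \<times> nat) list \<Rightarrow> gsym" where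
  "Ywalk m \<omega> = ginv m (Xwalk m \<omega>)"

text \<open>T_j \<le> t: position j was selected on the first draw in one of the first t steps.\<close>
definition hit_by :: "nat \<Rightarrow> (nat \<times> nat \<times> nat) list \<Rightarrow> bool" where
  "hit_by j \<omega> \<longleftrightarrow> (\<exists>s \<in> set \<omega>. fst s = j)"

definition Gset :: "nat \<Rightarrow> nat \<Rightarrow> gsym \<Rightarrow> nat \<Rightarrow> (nat \<times> nat) set" where
  "Gset m n Y j = {(i, c). i \<in> {1..n} \<and> c < m}
                  - {gact m Y (i, c) | i c. j < i \<and> i \<le> n \<and> c < m}"

end

(*
  Write F(l) = Y^t(l) for the signed card Y^t(xi^0 l). Since Y^{t+1} = g_{i,j',k}^{-1} Y^t,
  a step (j', i, k) relabels F by the transposition (i j') and turns the cards F(i), F(j')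
  back by k. By induction on t we prove P_j in test-function form: for every g,
    E[1(T_j <= t) g(F on (j,n], F(j))] = E[1(T_j <= t) (1/mj) sum_{x in G_j} g(F on (j,n], x)].
  A step with j' = j puts at position j the card F(i) turned by -k, and as (i, k) ranges
  over [j] x Z_m this runs exactly once through G_j. A step touching only positions below j,
  or only positions above j, rewrites the tail but keeps F(j) and G_j; it is absorbed into
  the test function. A step with i <= j < j' puts a uniform card z of G_j at position j'
  (and, if i = j, the old card at j' at position j); exchanging the roles of z and the old
  card is a bijection between the old and the new G_j, so averaging over (i, k) again gives
  a test function of the old state.
*)

theory Submission
  imports Defs "HOL-Combinatorics.Transposition"
begin

type_synonym scard = "nat \<times> nat"
type_synonym ost_move = "nat \<times> nat \<times> nat"
type_synonym tail_test = "(nat \<Rightarrow> scard) \<Rightarrow> scard \<Rightarrow> real"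

definition reorient :: "nat \<Rightarrow> scard \<Rightarrow> int \<Rightarrow> scard" where
  "reorient m v d = (fst v, nat ((int (snd v) + d) mod int m))"

lemma fst_reorient [simp]: "fst (reorient m v d) = fst v"
  by (simp add: reorient_def)

lemma mod_diff_mod_diff: "(a - (a - c) mod m) mod m = c mod (m :: int)"
  by (simp add: mod_diff_right_eq)

lemma snd_reorient_less: "0 < m \<Longrightarrow> snd (reorient m v d) < m"
  by (simp add: reorient_def nat_less_iff)

lemma int_snd_reorient: "0 < m \<Longrightarrow> int (snd (reorient m v d)) = (int (snd v) + d) mod int m"
  by (simp add: reorient_def)

lemma reorient_0: "snd v < m \<Longrightarrow> reorient m v 0 = v"
  by (cases v) (simp add: reorient_def)

lemma reorient_cong_mod: "d mod int m = e mod int m \<Longrightarrow> reorient m v d = reorient m v e"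
  unfolding reorient_def by (metis mod_add_right_eq)

lemma gact_turn_to:
  assumes "0 < m" and "b < m"
  shows "\<exists>c<m. gact m Y (i, c) = (snd Y i, b)"
proof (intro exI conjI)
  let ?f = "fst Y i mod m"
  have "?f < m"
    using assms(1) by simp
  show "(b + (m - ?f)) mod m < m"
    using assms(1) by simp
  have "((b + (m - ?f)) mod m + fst Y i) mod m = (b + (m - ?f) + ?f) mod m"
    by (simp add: mod_add_left_eq mod_add_right_eq)
  also have "\<dots> = (b + m) mod m"
    using \<open>?f < m\<close> by (simp add: algebra_simps)
  also have "\<dots> = b"
    using assms(2) by simp
  finally show "gact m Y (i, (b + (m - ?f)) mod m) = (snd Y i, b)"
    by (simp add: gact_def)
qed

definition Yval :: "nat \<Rightarrow> ost_move list \<Rightarrow> nat \<Rightarrow> scard" where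
  "Yval m \<omega> l = gact m (Ywalk m \<omega>) (l, 0)"

lemma snd_ggen: "snd (ggen m i j k) = Transposition.transpose i j"
  by (auto simp: ggen_def Transposition.transpose_def)

lemma Xwalk_Nil: "Xwalk m [] = gid"
  by (simp add: Xwalk_def)

lemma Xwalk_snoc: "Xwalk m (\<omega> @ [(j, i, k)]) = gmult m (Xwalk m \<omega>) (ggen m i j k)"
  by (simp add: Xwalk_def)

lemma bij_snd_Xwalk: "bij (snd (Xwalk m \<omega>))"
proof (induction \<omega> rule: rev_induct)
  case Nil
  then show ?case by (simp add: Xwalk_Nil gid_def flip: id_def)
next
  case (snoc s \<omega>)
  obtain j i k where "s = (j, i, k)" by (cases s)
  with bij_comp[OF snoc bij_transpose[of i j]] show ?case
    by (simp add: Xwalk_snoc gmult_def snd_ggen comp_def)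
qed

lemma Yval_Nil: "Yval m [] l = (l, 0)"
  by (simp add: Yval_def Ywalk_def Xwalk_Nil gid_def ginv_def gact_def)

lemma snd_Yval_less: "0 < m \<Longrightarrow> snd (Yval m \<omega> l) < m"
  by (simp add: Yval_def gact_def)

lemma int_mod_negate: "0 < m \<Longrightarrow> int ((m - a mod m) mod m) = - int a mod int m"
  by (simp add: of_nat_mod mod_diff_left_eq[symmetric] mod_minus_eq)

lemma Yval_snoc:
  assumes m: "0 < m"
  shows "Yval m (\<omega> @ [(j, i, k)]) l =
    reorient m (Yval m \<omega> (Transposition.transpose i j l)) (- int (if l = i \<or> l = j then k mod m else 0))"
proof -
  let ?X = "Xwalk m \<omega>"
  define p where "p = inv (snd ?X) (Transposition.transpose i j l)"
  define c where "c = (if l = i \<or> l = j then k mod m else 0)"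
  have bij: "bij (snd ?X)" by (rule bij_snd_Xwalk)
  then have "inv (Transposition.transpose i j \<circ> snd ?X) = inv (snd ?X) \<circ> Transposition.transpose i j"
    by (simp add: o_inv_distrib)
  moreover have "snd ?X p = Transposition.transpose i j l"
    using bij by (simp add: p_def bij_is_surj surj_f_inv_f)
  moreover have "fst (ggen m i j k) (Transposition.transpose i j l) = c"
    by (auto simp: ggen_def Transposition.transpose_def c_def)
  ultimately have "Yval m (\<omega> @ [(j, i, k)]) l = (p, (m - (fst ?X p + c) mod m) mod m)"
    by (simp add: Yval_def Ywalk_def Xwalk_snoc gmult_def ginv_def gact_def snd_ggen p_def)
  moreover have "Yval m \<omega> (Transposition.transpose i j l) = (p, (m - fst ?X p mod m) mod m)"
    by (simp add: Yval_def Ywalk_def ginv_def gact_def p_def)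
  moreover have "int ((m - (fst ?X p + c) mod m) mod m) = (int ((m - fst ?X p mod m) mod m) - int c) mod int m"
    using m by (simp add: int_mod_negate mod_diff_left_eq)
  ultimately show ?thesis
    by (simp add: reorient_def c_def flip: int_mod_negate)
qed

lemma Yval_snoc_other:
  "0 < m \<Longrightarrow> l \<noteq> i \<Longrightarrow> l \<noteq> j \<Longrightarrow> Yval m (\<omega> @ [(j, i, k)]) l = Yval m \<omega> l"
  by (simp add: Yval_snoc reorient_0 snd_Yval_less)

lemma Yval_snoc_first_draw:
  "0 < m \<Longrightarrow> k < m \<Longrightarrow> Yval m (\<omega> @ [(j, i, k)]) j = reorient m (Yval m \<omega> i) (- int k)"
  by (simp add: Yval_snoc)

lemma Yval_snoc_second_draw:
  "0 < m \<Longrightarrow> k < m \<Longrightarrow> Yval m (\<omega> @ [(j, i, k)]) i = reorient m (Yval m \<omega> j) (- int k)"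
  by (simp add: Yval_snoc)

lemma fst_Yval_snoc:
  "0 < m \<Longrightarrow> fst (Yval m (\<omega> @ [(j, i, k)]) l) = fst (Yval m \<omega> (Transposition.transpose i j l))"
  by (simp add: Yval_snoc)

lemma inj_fst_Yval: "0 < m \<Longrightarrow> inj (\<lambda>l. fst (Yval m \<omega> l))"
proof (induction \<omega> rule: rev_induct)
  case Nil
  then show ?case by (simp add: Yval_Nil inj_def)
next
  case (snoc s \<omega>)
  obtain j i k where "s = (j, i, k)" by (cases s)
  with snoc inj_compose[OF snoc(1)[OF snoc(2)] inj_transpose[of i j]] show ?case
    by (simp add: fst_Yval_snoc comp_def)
qed

definition ost_moves :: "nat \<Rightarrow> nat \<Rightarrow> ost_move set" where
  "ost_moves m n = {(j, i, k). j \<in> {1..n} \<and> i \<in> {1..j} \<and> k < m}"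

lemma finite_ost_moves: "finite (ost_moves m n)"
  by (rule finite_subset[of _ "{1..n} \<times> {1..n} \<times> {..<m}"]) (auto simp: ost_moves_def)

lemma bij_betw_fst_Yval:
  assumes "0 < m" and "set \<omega> \<subseteq> ost_moves m n"
  shows "bij_betw (\<lambda>l. fst (Yval m \<omega> l)) {1..n} {1..n}"
  using assms(2)
proof (induction \<omega> rule: rev_induct)
  case Nil
  then show ?case by (simp add: Yval_Nil bij_betw_def)
next
  case (snoc s \<omega>)
  obtain j i k where s: "s = (j, i, k)" by (cases s)
  with snoc.prems have "i \<in> {1..n}" "j \<in> {1..n}" by (auto simp: ost_moves_def)
  with snoc have "bij_betw ((\<lambda>l. fst (Yval m \<omega> l)) \<circ> Transposition.transpose i j) {1..n} {1..n}"
    by (intro bij_betw_trans[of _ _ "{1..n}"]) auto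
  with assms(1) show ?case by (simp add: s fst_Yval_snoc comp_def)
qed

lemma set_pmf_ost_step: "0 < m \<Longrightarrow> 0 < n \<Longrightarrow> set_pmf (ost_step m n) = ost_moves m n"
  by (auto simp: ost_step_def ost_moves_def lessThan_empty_iff)

lemma set_pmf_ost_steps:
  assumes "0 < m" and "0 < n"
  shows "set_pmf (ost_steps m n t) \<subseteq> {\<omega>. set \<omega> \<subseteq> ost_moves m n \<and> length \<omega> = t}"
  by (induction t) (fastforce simp: set_pmf_ost_step[OF assms])+

lemma finite_set_pmf_ost_steps: "0 < m \<Longrightarrow> 0 < n \<Longrightarrow> finite (set_pmf (ost_steps m n t))"
  by (rule finite_subset[OF set_pmf_ost_steps])
    (auto intro: finite_lists_length_eq finite_ost_moves)

lemma expectation_ost_step: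
  assumes m: "0 < m" and n: "0 < n"
  shows "measure_pmf.expectation (ost_step m n) h =
    (\<Sum>j\<in>{1..n}. \<Sum>i\<in>{1..j}. \<Sum>k<m. h (j, i, k) / (real n * real j * real m))"
proof -
  define draw_k where "draw_k j i = pmf_of_set {..<m} \<bind> (\<lambda>k. return_pmf (j, i, k))" for j i :: nat
  define draw_ik where "draw_ik j = pmf_of_set {1..j} \<bind> draw_k j" for j
  have fin_k: "finite (set_pmf (draw_k j i))" for j i
    using m by (simp add: draw_k_def lessThan_empty_iff)
  have fin_ik: "finite (set_pmf (draw_ik j))" if "1 \<le> j" for j
    using that fin_k by (simp add: draw_ik_def)
  have exp_k: "measure_pmf.expectation (draw_k j i) h = (\<Sum>k<m. h (j, i, k) / real m)" for j i
    unfolding draw_k_def using m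
    by (subst pmf_expectation_bind_pmf_of_set) (auto simp: lessThan_empty_iff field_simps)
  have exp_ik: "measure_pmf.expectation (draw_ik j) h = (\<Sum>i\<in>{1..j}. \<Sum>k<m. h (j, i, k) / (real j * real m))"
    if "1 \<le> j" for j
    unfolding draw_ik_def using that fin_k
    by (subst pmf_expectation_bind_pmf_of_set) (auto simp: exp_k sum_divide_distrib field_simps)
  have "measure_pmf.expectation (ost_step m n) h = (\<Sum>j\<in>{1..n}. measure_pmf.expectation (draw_ik j) h / real n)"
    unfolding ost_step_def draw_ik_def[symmetric, abs_def] draw_k_def[symmetric, abs_def] using n fin_ik
    by (subst pmf_expectation_bind_pmf_of_set) (auto simp: field_simps)
  also have "\<dots> = (\<Sum>j\<in>{1..n}. \<Sum>i\<in>{1..j}. \<Sum>k<m. h (j, i, k) / (real n * real j * real m))"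
    by (intro sum.cong refl) (simp add: exp_ik sum_divide_distrib field_simps)
  finally show ?thesis .
qed

lemma expectation_ost_steps_Suc:
  assumes m: "0 < m" and n: "0 < n"
  shows "measure_pmf.expectation (ost_steps m n (Suc t)) h =
    measure_pmf.expectation (ost_steps m n t)
      (\<lambda>\<omega>. \<Sum>j\<in>{1..n}. \<Sum>i\<in>{1..j}. \<Sum>k<m. h (\<omega> @ [(j, i, k)]) / (real n * real j * real m))"
proof -
  let ?p = "ost_steps m n t"
  have fin: "finite (set_pmf ?p)"
    by (rule finite_set_pmf_ost_steps[OF m n])
  have "measure_pmf.expectation (ost_steps m n (Suc t)) h =
      (\<Sum>\<omega>\<in>set_pmf ?p. pmf ?p \<omega> *\<^sub>R measure_pmf.expectation (ost_step m n) (\<lambda>s. h (\<omega> @ [s])))"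
    by (simp only: ost_steps.simps, subst pmf_expectation_bind[OF fin])
      (auto simp: set_pmf_ost_step[OF m n] finite_ost_moves)
  also have "\<dots> = measure_pmf.expectation ?p
      (\<lambda>\<omega>. \<Sum>j\<in>{1..n}. \<Sum>i\<in>{1..j}. \<Sum>k<m. h (\<omega> @ [(j, i, k)]) / (real n * real j * real m))"
    by (subst integral_measure_pmf[OF fin]) (auto simp: expectation_ost_step[OF m n])
  finally show ?thesis .
qed

lemma inj_on_reorient_Yval:
  assumes m: "0 < m"
  shows "inj_on (\<lambda>(i, k). reorient m (Yval m \<omega> i) (- int k)) (UNIV \<times> {..<m})"
proof (rule inj_onI, clarify)
  have k_from_snd: "int k = (int (snd (Yval m \<omega> i)) - int (snd (reorient m (Yval m \<omega> i) (- int k)))) mod int m"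
    if "k < m" for i k
    using that m by (simp add: int_snd_reorient mod_diff_mod_diff)
  fix i k i' k'
  assume "k < m" "k' < m" and eq: "reorient m (Yval m \<omega> i) (- int k) = reorient m (Yval m \<omega> i') (- int k')"
  from arg_cong[OF eq, of fst] inj_fst_Yval[OF m] have "i = i'"
    by (simp add: inj_def)
  moreover from this eq k_from_snd[OF \<open>k < m\<close>, of i'] k_from_snd[OF \<open>k' < m\<close>, of i']
  have "int k = int k'"
    by simp
  ultimately show "i = i' \<and> k = k'"
    by simp
qed

text \<open>A step (j', j, k) replaces F(j') = a by b = F(j) turned by -k, and F(j) by a turned by -k;
  \<open>exchange m a b\<close> computes the latter from F(j) and b alone.\<close>

definition exchange :: "nat \<Rightarrow> scard \<Rightarrow> scard \<Rightarrow> scard \<Rightarrow> scard" where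
  "exchange m a b x = (if fst x = fst b then reorient m a (int (snd b) - int (snd x)) else x)"

lemma exchange_exchange:
  assumes "0 < m" and "fst x \<noteq> fst a" and "snd x < m"
  shows "exchange m b a (exchange m a b x) = x"
proof (cases "fst x = fst b")
  case True
  have "(int (snd b) + (int (snd a) - (int (snd a) + (int (snd b) - int (snd x))) mod int m)) mod int m
      = ((int (snd a) + int (snd b)) - ((int (snd a) + int (snd b)) - int (snd x)) mod int m) mod int m"
    by (simp add: algebra_simps)
  also have "\<dots> = int (snd x)"
    using assms by (simp add: mod_diff_mod_diff)
  finally show ?thesis
    using True assms(1) by (cases x) (simp add: exchange_def reorient_def)
qed (use assms in \<open>simp add: exchange_def\<close>)

locale ost_position =
  fixes m n j :: nat
  assumes m_pos: "0 < m" and j_pos: "1 \<le> j" and j_le_n: "j \<le> n"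
begin

lemma n_pos: "0 < n"
  using j_pos j_le_n by simp

definition tail :: "ost_move list \<Rightarrow> nat \<Rightarrow> scard" where
  "tail \<omega> = restrict (Yval m \<omega>) {j<..n}"

definition avail :: "(nat \<Rightarrow> scard) \<Rightarrow> scard set" where
  "avail r = {x. fst x \<in> {1..n} \<and> snd x < m \<and> (\<forall>i\<in>{j<..n}. fst x \<noteq> fst (r i))}"

lemma finite_avail: "finite (avail r)"
  by (rule finite_subset[of _ "{1..n} \<times> {..<m}"]) (auto simp: avail_def)

lemma fst_tail_valid:
  assumes "set \<omega> \<subseteq> ost_moves m n" and "j' \<in> {j<..n}"
  shows "fst (tail \<omega> j') \<in> {1..n}"
    and "\<forall>i\<in>{j<..n}. i \<noteq> j' \<longrightarrow> fst (tail \<omega> i) \<noteq> fst (tail \<omega> j')"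
  using assms bij_betw_fst_Yval[OF m_pos assms(1)] inj_fst_Yval[OF m_pos, of \<omega>]
  by (auto simp: tail_def bij_betw_def inj_def)

lemma image_reorient_Yval:
  assumes valid: "set \<omega> \<subseteq> ost_moves m n"
  shows "(\<lambda>(i, k). reorient m (Yval m \<omega> i) (- int k)) ` ({1..j} \<times> {..<m}) = avail (tail \<omega>)"
proof (intro equalityI subsetI)
  have inj: "inj (\<lambda>l. fst (Yval m \<omega> l))"
    by (rule inj_fst_Yval[OF m_pos])
  have bij: "bij_betw (\<lambda>l. fst (Yval m \<omega> l)) {1..n} {1..n}"
    by (rule bij_betw_fst_Yval[OF m_pos valid])
  {
    fix y assume "y \<in> (\<lambda>(i, k). reorient m (Yval m \<omega> i) (- int k)) ` ({1..j} \<times> {..<m})"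
    then obtain i k where i: "i \<in> {1..j}" and y: "y = reorient m (Yval m \<omega> i) (- int k)"
      by auto
    have "fst (Yval m \<omega> i) \<in> {1..n}"
      using bij i j_le_n by (auto simp: bij_betw_def)
    moreover have "fst (Yval m \<omega> i) \<noteq> fst (tail \<omega> l)" if "l \<in> {j<..n}" for l
      using that i injD[OF inj, of i l] by (auto simp: tail_def)
    ultimately show "y \<in> avail (tail \<omega>)"
      by (simp add: y avail_def snd_reorient_less[OF m_pos])
  next
    fix x assume x: "x \<in> avail (tail \<omega>)"
    then have "fst x \<in> (\<lambda>l. fst (Yval m \<omega> l)) ` {1..n}"
      using bij by (simp add: avail_def bij_betw_def)
    then obtain i where i: "i \<in> {1..n}" "fst (Yval m \<omega> i) = fst x"
      by auto
    have "i \<le> j"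
    proof (rule ccontr)
      assume "\<not> i \<le> j"
      with i have "i \<in> {j<..n}" by simp
      with x have "fst x \<noteq> fst (tail \<omega> i)"
        by (simp add: avail_def)
      with i \<open>i \<in> {j<..n}\<close> show False
        by (simp add: tail_def)
    qed
    define k where "k = nat ((int (snd (Yval m \<omega> i)) - int (snd x)) mod int m)"
    have "k < m"
      using m_pos by (simp add: k_def nat_less_iff)
    moreover have "reorient m (Yval m \<omega> i) (- int k) = x"
      using x i m_pos by (cases x) (simp add: reorient_def k_def avail_def mod_diff_mod_diff)
    ultimately show "x \<in> (\<lambda>(i, k). reorient m (Yval m \<omega> i) (- int k)) ` ({1..j} \<times> {..<m})"
      using i \<open>i \<le> j\<close> by (intro image_eqI[of _ _ "(i, k)"]) auto
  }
qed

lemma bij_betw_avail: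
  assumes "set \<omega> \<subseteq> ost_moves m n"
  shows "bij_betw (\<lambda>(i, k). reorient m (Yval m \<omega> i) (- int k)) ({1..j} \<times> {..<m}) (avail (tail \<omega>))"
  unfolding bij_betw_def
proof
  show "inj_on (\<lambda>(i, k). reorient m (Yval m \<omega> i) (- int k)) ({1..j} \<times> {..<m})"
    by (rule inj_on_subset[OF inj_on_reorient_Yval[OF m_pos]]) auto
qed (rule image_reorient_Yval[OF assms])

lemma sum_avail:
  assumes "set \<omega> \<subseteq> ost_moves m n"
  shows "(\<Sum>i\<in>{1..j}. \<Sum>k<m. h (reorient m (Yval m \<omega> i) (- int k))) = (\<Sum>x\<in>avail (tail \<omega>). h x)"
proof -
  have "(\<Sum>i\<in>{1..j}. \<Sum>k<m. h (reorient m (Yval m \<omega> i) (- int k)))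
      = (\<Sum>(i, k)\<in>{1..j} \<times> {..<m}. h (reorient m (Yval m \<omega> i) (- int k)))"
    by (simp add: sum.cartesian_product)
  also have "\<dots> = (\<Sum>x\<in>avail (tail \<omega>). h x)"
    using sum.reindex_bij_betw[OF bij_betw_avail[OF assms], of h] by (simp add: case_prod_unfold)
  finally show ?thesis .
qed

definition expect :: "nat \<Rightarrow> (ost_move list \<Rightarrow> real) \<Rightarrow> real" where
  "expect t h = measure_pmf.expectation (ost_steps m n t) h"

lemma expect_cong:
  assumes "\<And>\<omega>. set \<omega> \<subseteq> ost_moves m n \<Longrightarrow> h \<omega> = h' \<omega>"
  shows "expect t h = expect t h'"
  unfolding expect_def using assms set_pmf_ost_steps[OF m_pos n_pos, of t]
  by (intro integral_cong_AE) (auto simp: AE_measure_pmf_iff)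

lemma expect_sum: "expect t (\<lambda>\<omega>. \<Sum>a\<in>A. h a \<omega>) = (\<Sum>a\<in>A. expect t (h a))"
  unfolding expect_def
  by (intro Bochner_Integration.integral_sum integrable_measure_pmf_finite
      finite_set_pmf_ost_steps m_pos n_pos)

lemma expect_add: "expect t (\<lambda>\<omega>. h \<omega> + h' \<omega>) = expect t h + expect t h'"
  using expect_sum[of t "\<lambda>b. if b then h else h'" UNIV] by (simp add: UNIV_bool add.commute)

lemma expect_divide: "expect t (\<lambda>\<omega>. h \<omega> / c) = expect t h / c"
  by (simp add: expect_def)

definition move_sum :: "(ost_move list \<Rightarrow> real) \<Rightarrow> nat \<Rightarrow> ost_move list \<Rightarrow> real" where
  "move_sum h j' \<omega> = (\<Sum>i\<in>{1..j'}. \<Sum>k<m. h (\<omega> @ [(j', i, k)]))"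

lemma expect_Suc:
  "expect (Suc t) h = (\<Sum>j'\<in>{1..n}. expect t (move_sum h j') / (real n * real j' * real m))"
proof -
  have "expect (Suc t) h = expect t (\<lambda>\<omega>. \<Sum>j'\<in>{1..n}. move_sum h j' \<omega> / (real n * real j' * real m))"
    unfolding expect_def expectation_ost_steps_Suc[OF m_pos n_pos] move_sum_def
    by (simp add: sum_divide_distrib)
  then show ?thesis
    by (simp add: expect_sum expect_divide)
qed

definition at_j :: "tail_test \<Rightarrow> ost_move list \<Rightarrow> real" where
  "at_j g \<omega> = (if hit_by j \<omega> then g (tail \<omega>) (Yval m \<omega> j) else 0)"

definition avg_avail :: "tail_test \<Rightarrow> ost_move list \<Rightarrow> real" where
  "avg_avail g \<omega> = (if hit_by j \<omega> then (\<Sum>x\<in>avail (tail \<omega>). g (tail \<omega>) x) / (real m * real j) else 0)"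

text \<open>Property P_j at time t in test-function form: on the event T_j \<le> t and conditionally on
  the tail, Y^t(j) is uniform on the m j available cards, i.e. on G_j (see \<open>Gset_eq_avail\<close>).\<close>

definition uniform_at_j :: "nat \<Rightarrow> bool" where
  "uniform_at_j t \<longleftrightarrow> (\<forall>g. expect t (at_j g) = expect t (avg_avail g))"

lemma hit_by_snoc: "hit_by j (\<omega> @ [(j', i, k)]) \<longleftrightarrow> hit_by j \<omega> \<or> j' = j"
  by (auto simp: hit_by_def)

definition move_tail :: "nat \<Rightarrow> nat \<Rightarrow> nat \<Rightarrow> (nat \<Rightarrow> scard) \<Rightarrow> nat \<Rightarrow> scard" where
  "move_tail j' i k r = restrict (\<lambda>l. reorient m (r (Transposition.transpose i j' l))
     (- int (if l = i \<or> l = j' then k mod m else 0))) {j<..n}"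

lemma tail_snoc_move_tail:
  assumes "i \<in> {j<..n} \<longleftrightarrow> j' \<in> {j<..n}"
  shows "tail (\<omega> @ [(j', i, k)]) = move_tail j' i k (tail \<omega>)"
proof
  fix l
  have "Transposition.transpose i j' l \<in> {j<..n}" if "l \<in> {j<..n}"
    using assms that by (auto simp: Transposition.transpose_def)
  then show "tail (\<omega> @ [(j', i, k)]) l = move_tail j' i k (tail \<omega>) l"
    by (simp add: tail_def move_tail_def Yval_snoc[OF m_pos])
qed

lemma avail_move_tail:
  assumes "i \<in> {j<..n} \<longleftrightarrow> j' \<in> {j<..n}"
  shows "avail (move_tail j' i k r) = avail r"
proof -
  have "(\<forall>l\<in>{j<..n}. a \<noteq> fst (move_tail j' i k r l))
      \<longleftrightarrow> (\<forall>l\<in>Transposition.transpose i j' ` {j<..n}. a \<noteq> fst (r l))" for a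
    by (auto simp: move_tail_def)
  with assms show ?thesis
    by (simp add: avail_def)
qed

lemma expect_neutral_move:
  assumes "uniform_at_j t" and "j \<notin> {i, j'}" and "i \<in> {j<..n} \<longleftrightarrow> j' \<in> {j<..n}"
  shows "expect t (\<lambda>\<omega>. at_j g (\<omega> @ [(j', i, k)]))
    = expect t (\<lambda>\<omega>. avg_avail g (\<omega> @ [(j', i, k)]))"
proof -
  let ?g = "\<lambda>r. g (move_tail j' i k r)"
  have "(\<lambda>\<omega>. at_j g (\<omega> @ [(j', i, k)])) = at_j ?g"
    using assms(2) by (intro ext)
      (simp add: at_j_def hit_by_snoc tail_snoc_move_tail[OF assms(3)] Yval_snoc_other[OF m_pos])
  moreover have "(\<lambda>\<omega>. avg_avail g (\<omega> @ [(j', i, k)])) = avg_avail ?g"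
    using assms(2) by (intro ext)
      (simp add: avg_avail_def hit_by_snoc tail_snoc_move_tail[OF assms(3)] avail_move_tail[OF assms(3)])
  ultimately show ?thesis
    using assms(1) by (simp add: uniform_at_j_def)
qed

lemma move_sum_first_draw_j:
  assumes "set \<omega> \<subseteq> ost_moves m n"
  shows "move_sum (at_j g) j \<omega> = move_sum (avg_avail g) j \<omega>"
proof -
  have tail_eq: "tail (\<omega> @ [(j, i, k)]) = tail \<omega>" if "i \<in> {1..j}" for i k
    using that by (intro ext) (simp add: tail_def Yval_snoc_other[OF m_pos])
  have "move_sum (at_j g) j \<omega> = (\<Sum>i\<in>{1..j}. \<Sum>k<m. g (tail \<omega>) (reorient m (Yval m \<omega> i) (- int k)))"
    unfolding move_sum_def
    by (intro sum.cong refl) (simp add: at_j_def hit_by_snoc tail_eq Yval_snoc_first_draw[OF m_pos])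
  also have "\<dots> = (\<Sum>x\<in>avail (tail \<omega>). g (tail \<omega>) x)"
    by (rule sum_avail[OF assms])
  also have "\<dots> = (\<Sum>i\<in>{1..j}. \<Sum>k<m. (\<Sum>x\<in>avail (tail \<omega>). g (tail \<omega>) x) / (real m * real j))"
    using m_pos j_pos by simp
  also have "\<dots> = move_sum (avg_avail g) j \<omega>"
    unfolding move_sum_def by (intro sum.cong refl) (simp add: avg_avail_def hit_by_snoc tail_eq)
  finally show ?thesis .
qed

lemma tail_snoc_swap:
  assumes "i \<le> j" and "j' \<in> {j<..n}" and "k < m"
  shows "tail (\<omega> @ [(j', i, k)]) = (tail \<omega>)(j' := reorient m (Yval m \<omega> i) (- int k))"
proof
  fix l
  show "tail (\<omega> @ [(j', i, k)]) l = ((tail \<omega>)(j' := reorient m (Yval m \<omega> i) (- int k))) l"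
    using assms by (cases "l = j'") (auto simp: tail_def Yval_snoc_first_draw[OF m_pos] Yval_snoc_other[OF m_pos])
qed

lemma Yval_j_snoc_swap:
  assumes "i \<in> {1..j}" and "j' \<in> {j<..n}" and "k < m"
  shows "Yval m (\<omega> @ [(j', i, k)]) j
    = exchange m (tail \<omega> j') (reorient m (Yval m \<omega> i) (- int k)) (Yval m \<omega> j)"
proof (cases "i = j")
  case True
  have "(int (snd (reorient m (Yval m \<omega> j) (- int k))) - int (snd (Yval m \<omega> j))) mod int m = - int k mod int m"
    using m_pos by (simp add: int_snd_reorient mod_diff_left_eq)
  with True assms show ?thesis
    by (auto simp: exchange_def tail_def Yval_snoc_second_draw[OF m_pos] intro: reorient_cong_mod)
next
  case False
  with inj_fst_Yval[OF m_pos, of \<omega>] have "fst (Yval m \<omega> i) \<noteq> fst (Yval m \<omega> j)"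
    by (auto dest: injD)
  with False assms show ?thesis
    by (simp add: exchange_def Yval_snoc_other[OF m_pos])
qed

lemma bij_betw_exchange:
  assumes "j' \<in> {j<..n}" and "fst (r j') \<in> {1..n}"
    and "\<forall>i\<in>{j<..n}. i \<noteq> j' \<longrightarrow> fst (r i) \<noteq> fst (r j')" and "z \<in> avail r"
  shows "bij_betw (exchange m (r j') z) (avail r) (avail (r(j' := z)))"
proof (rule bij_betw_byWitness[where f' = "exchange m z (r j')"])
  show "\<forall>x\<in>avail r. exchange m z (r j') (exchange m (r j') z x) = x"
    using assms(1) by (auto simp: avail_def intro: exchange_exchange[OF m_pos])
  show "\<forall>x\<in>avail (r(j' := z)). exchange m (r j') z (exchange m z (r j') x) = x"
    using assms(1) by (auto simp: avail_def intro!: exchange_exchange[OF m_pos])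
  show "exchange m (r j') z ` avail r \<subseteq> avail (r(j' := z))"
    using assms by (auto simp: avail_def exchange_def snd_reorient_less[OF m_pos])
  show "exchange m z (r j') ` avail (r(j' := z)) \<subseteq> avail r"
    using assms by (auto simp: avail_def exchange_def snd_reorient_less[OF m_pos])
qed

definition swap_test :: "nat \<Rightarrow> tail_test \<Rightarrow> tail_test" where
  "swap_test j' g r x = (\<Sum>z\<in>avail r. g (r(j' := z)) (exchange m (r j') z x))"

lemma sum_at_j_snoc_swap:
  assumes valid: "set \<omega> \<subseteq> ost_moves m n" and j': "j' \<in> {j<..n}"
  shows "(\<Sum>i\<in>{1..j}. \<Sum>k<m. at_j g (\<omega> @ [(j', i, k)])) = at_j (swap_test j' g) \<omega>"
proof -
  let ?H = "\<lambda>z. if hit_by j \<omega> then g ((tail \<omega>)(j' := z)) (exchange m (tail \<omega> j') z (Yval m \<omega> j)) else 0"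
  have "(\<Sum>i\<in>{1..j}. \<Sum>k<m. at_j g (\<omega> @ [(j', i, k)]))
      = (\<Sum>i\<in>{1..j}. \<Sum>k<m. ?H (reorient m (Yval m \<omega> i) (- int k)))"
    using j' by (intro sum.cong refl) (simp add: at_j_def hit_by_snoc tail_snoc_swap Yval_j_snoc_swap)
  also have "\<dots> = (\<Sum>z\<in>avail (tail \<omega>). ?H z)"
    by (rule sum_avail[OF valid])
  also have "\<dots> = at_j (swap_test j' g) \<omega>"
    by (simp add: at_j_def swap_test_def)
  finally show ?thesis .
qed

lemma sum_avg_avail_snoc_swap:
  assumes valid: "set \<omega> \<subseteq> ost_moves m n" and j': "j' \<in> {j<..n}"
  shows "(\<Sum>i\<in>{1..j}. \<Sum>k<m. avg_avail g (\<omega> @ [(j', i, k)])) = avg_avail (swap_test j' g) \<omega>"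
proof -
  let ?r = "tail \<omega>"
  let ?H = "\<lambda>z. if hit_by j \<omega> then (\<Sum>x\<in>avail (?r(j' := z)). g (?r(j' := z)) x) / (real m * real j) else 0"
  have "(\<Sum>i\<in>{1..j}. \<Sum>k<m. avg_avail g (\<omega> @ [(j', i, k)]))
      = (\<Sum>i\<in>{1..j}. \<Sum>k<m. ?H (reorient m (Yval m \<omega> i) (- int k)))"
    using j' by (intro sum.cong refl) (simp add: avg_avail_def hit_by_snoc tail_snoc_swap)
  also have "\<dots> = (\<Sum>z\<in>avail ?r. ?H z)"
    by (rule sum_avail[OF valid])
  also have "\<dots> = (if hit_by j \<omega> then (\<Sum>z\<in>avail ?r. \<Sum>x\<in>avail (?r(j' := z)). g (?r(j' := z)) x)
      / (real m * real j) else 0)"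
    by (simp add: sum_divide_distrib)
  also have "(\<Sum>z\<in>avail ?r. \<Sum>x\<in>avail (?r(j' := z)). g (?r(j' := z)) x)
      = (\<Sum>z\<in>avail ?r. \<Sum>x\<in>avail ?r. g (?r(j' := z)) (exchange m (?r j') z x))"
    using fst_tail_valid[OF valid j'] j'
    by (intro sum.cong refl sum.reindex_bij_betw[symmetric] bij_betw_exchange) auto
  also have "\<dots> = (\<Sum>x\<in>avail ?r. swap_test j' g ?r x)"
    unfolding swap_test_def by (rule sum.swap)
  finally show ?thesis
    by (simp add: avg_avail_def)
qed

lemma expect_swap_into_tail:
  assumes unif: "uniform_at_j t" and j': "j' \<in> {j<..n}"
  shows "expect t (\<lambda>\<omega>. \<Sum>i\<in>{1..j}. \<Sum>k<m. at_j g (\<omega> @ [(j', i, k)]))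
       = expect t (\<lambda>\<omega>. \<Sum>i\<in>{1..j}. \<Sum>k<m. avg_avail g (\<omega> @ [(j', i, k)]))"
proof -
  have "expect t (\<lambda>\<omega>. \<Sum>i\<in>{1..j}. \<Sum>k<m. at_j g (\<omega> @ [(j', i, k)])) = expect t (at_j (swap_test j' g))"
    using j' by (intro expect_cong sum_at_j_snoc_swap)
  also have "\<dots> = expect t (avg_avail (swap_test j' g))"
    using unif by (simp add: uniform_at_j_def)
  also have "\<dots> = expect t (\<lambda>\<omega>. \<Sum>i\<in>{1..j}. \<Sum>k<m. avg_avail g (\<omega> @ [(j', i, k)]))"
    using j' by (intro expect_cong sum_avg_avail_snoc_swap[symmetric])
  finally show ?thesis .
qed

lemma expect_move_sum:
  assumes unif: "uniform_at_j t" and j': "j' \<in> {1..n}"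
  shows "expect t (move_sum (at_j g) j') = expect t (move_sum (avg_avail g) j')"
proof -
  have neutral: "expect t (\<lambda>\<omega>. \<Sum>i\<in>I. \<Sum>k<m. at_j g (\<omega> @ [(j', i, k)]))
      = expect t (\<lambda>\<omega>. \<Sum>i\<in>I. \<Sum>k<m. avg_avail g (\<omega> @ [(j', i, k)]))"
    if "\<forall>i\<in>I. j \<notin> {i, j'} \<and> (i \<in> {j<..n} \<longleftrightarrow> j' \<in> {j<..n})" for I
    using that by (simp add: expect_sum expect_neutral_move[OF unif])
  consider "j' < j" | "j' = j" | "j < j'"
    by linarith
  then show ?thesis
  proof cases
    case 1
    then show ?thesis
      unfolding move_sum_def by (intro neutral) auto
  next
    case 2
    then show ?thesis
      by (auto intro: expect_cong move_sum_first_draw_j)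
  next
    case 3
    then have split: "{1..j'} = {1..j} \<union> {j<..j'}"
      using j_pos by auto
    have decomp: "move_sum h j' = (\<lambda>\<omega>. (\<Sum>i\<in>{1..j}. \<Sum>k<m. h (\<omega> @ [(j', i, k)]))
        + (\<Sum>i\<in>{j<..j'}. \<Sum>k<m. h (\<omega> @ [(j', i, k)])))" for h
      unfolding move_sum_def split by (subst sum.union_disjoint) auto
    have "j' \<in> {j<..n}"
      using 3 j' by simp
    moreover have "expect t (\<lambda>\<omega>. \<Sum>i\<in>{j<..j'}. \<Sum>k<m. at_j g (\<omega> @ [(j', i, k)]))
        = expect t (\<lambda>\<omega>. \<Sum>i\<in>{j<..j'}. \<Sum>k<m. avg_avail g (\<omega> @ [(j', i, k)]))"
      using 3 j' by (intro neutral) auto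
    ultimately show ?thesis
      unfolding decomp expect_add by (simp only: expect_swap_into_tail[OF unif])
  qed
qed

lemma uniform_at_j_all: "uniform_at_j t"
proof (induction t)
  case 0
  show ?case
    by (simp add: uniform_at_j_def expect_def at_j_def avg_avail_def hit_by_def)
next
  case (Suc t)
  then show ?case
    by (simp add: uniform_at_j_def expect_Suc expect_move_sum)
qed

lemma prob_Yval_j_eq:
  "measure_pmf.prob (ost_steps m n t) {\<omega>. hit_by j \<omega> \<and> Q (tail \<omega>) \<and> Yval m \<omega> j = x}
   = measure_pmf.prob (ost_steps m n t) {\<omega>. hit_by j \<omega> \<and> Q (tail \<omega>) \<and> x \<in> avail (tail \<omega>)}
     / (real m * real j)"
proof -
  define g where "g r z = (if z = x then of_bool (Q r) else 0 :: real)" for r z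
  have "at_j g = indicator {\<omega>. hit_by j \<omega> \<and> Q (tail \<omega>) \<and> Yval m \<omega> j = x}"
    by (auto simp: at_j_def g_def indicator_def)
  moreover have "avg_avail g
      = (\<lambda>\<omega>. indicator {\<omega>. hit_by j \<omega> \<and> Q (tail \<omega>) \<and> x \<in> avail (tail \<omega>)} \<omega> / (real m * real j))"
    by (auto simp: avg_avail_def g_def indicator_def finite_avail)
  moreover have "expect t (at_j g) = expect t (avg_avail g)"
    using uniform_at_j_all by (simp add: uniform_at_j_def)
  ultimately show ?thesis
    by (simp add: expect_divide) (simp add: expect_def)
qed

lemma Gset_eq_avail: "Gset m n (Ywalk m \<omega>) j = avail (tail \<omega>)"
proof -
  let ?Y = "Ywalk m \<omega>"
  have fst_Yval: "fst (Yval m \<omega> i) = snd ?Y i" for i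
    by (simp add: Yval_def gact_def)
  have "{gact m ?Y (i, c) | i c. j < i \<and> i \<le> n \<and> c < m}
      = {x. snd x < m \<and> (\<exists>i\<in>{j<..n}. fst x = fst (Yval m \<omega> i))}" (is "?L = ?R")
  proof (intro equalityI subsetI)
    fix x assume "x \<in> ?L"
    then show "x \<in> ?R"
      using m_pos by (auto simp: gact_def fst_Yval)
  next
    fix x assume "x \<in> ?R"
    then obtain i where i: "i \<in> {j<..n}" "fst x = fst (Yval m \<omega> i)" and "snd x < m"
      by auto
    with gact_turn_to[OF m_pos, of "snd x" ?Y i] obtain c where "c < m" "gact m ?Y (i, c) = x"
      by (cases x) (auto simp: fst_Yval)
    with i show "x \<in> ?L"
      by auto
  qed
  then show ?thesis
    by (auto simp: Gset_def avail_def tail_def)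
qed

end

theorem proposition4p6:
  fixes m n j t :: nat and x :: "nat \<times> nat" and y :: "nat \<Rightarrow> nat \<times> nat"
  assumes "1 \<le> m" and "j \<in> {1..n}"
  defines "E \<equiv> {\<omega>. hit_by j \<omega> \<and> (\<forall>i\<in>{j<..n}. gact m (Ywalk m \<omega>) (i, 0) = y i)}"
  shows "measure_pmf.prob (ost_steps m n t) {\<omega> \<in> E. gact m (Ywalk m \<omega>) (j, 0) = x}
       = measure_pmf.prob (ost_steps m n t) {\<omega> \<in> E. x \<in> Gset m n (Ywalk m \<omega>) j} / (real m * real j)"
proof -
  interpret ost_position m n j
    using assms by unfold_locales auto
  define Q where "Q r \<longleftrightarrow> (\<forall>i\<in>{j<..n}. r i = y i)" for r :: "nat \<Rightarrow> scard"
  have "E = {\<omega>. hit_by j \<omega> \<and> Q (tail \<omega>)}"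
    by (auto simp: E_def Q_def tail_def Yval_def)
  then show ?thesis
    using prob_Yval_j_eq[of t Q x] by (simp add: Yval_def Gset_eq_avail conj_assoc)
qed

end
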